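(* Let $d\ge 2$ and consider the four-party space $\mathbb{C}^d_A\otimes\mathbb{C}^d_B\otimes\mathbb{C}^d_C\otimes\mathbb{C}^d_D$. The states $|\Phi_d\rangle^{AB}\otimes|\Phi_d\rangle^{CD}$ and $|\Phi_d\rangle^{AC}\otimes|\Phi_d\rangle^{BD}$ are both SLOCC maximal, and they are incomparable under $\le_{\mathrm{SLOCC}}$.
   Context: $|\Phi_d\rangle^{XY}=\sum_{i=0}^{d-1}|i\rangle^X|i\rangle^Y$ for orthonormal bases $\{|i\rangle\}$ of the two indicated factors. $|\psi\rangle\le_{\mathrm{SLOCC}}|\phi\rangle$ means $(L_A\otimes L_B\otimes L_C\otimes L_D)|\phi\rangle=|\psi\rangle$ for some linear operators on the respective factors. A state $|\phi\rangle$ is SLOCC maximal if for every $|\psi\rangle$ in the space, $|\phi\rangle\le_{\mathrm{SLOCC}}|\psi\rangle$ implies $|\psi\rangle\le_{\mathrm{SLOCC}}|\phi\rangle$. Incomparable means neither state is $\le_{\mathrm{SLOCC}}$ the other. *)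

theory Defs
  imports Main "HOL.Complex"
begin

text \<open>A vector in C^d_A (x) C^d_B (x) C^d_C (x) C^d_D, given by its coefficients
  in the product of computational bases; the local dimension d is CARD('d).\<close>
type_synonym 'd tensor4 = "'d \<Rightarrow> 'd \<Rightarrow> 'd \<Rightarrow> 'd \<Rightarrow> complex"

type_synonym 'd op = "'d \<Rightarrow> 'd \<Rightarrow> complex"

definition apply_local :: "'d::finite op \<Rightarrow> 'd op \<Rightarrow> 'd op \<Rightarrow> 'd op \<Rightarrow> 'd tensor4 \<Rightarrow> 'd tensor4" where
  "apply_local LA LB LC LD \<phi> = (\<lambda>i j k l.
     \<Sum>a\<in>UNIV. \<Sum>b\<in>UNIV. \<Sum>c\<in>UNIV. \<Sum>e\<in>UNIV.
        LA i a * LB j b * LC k c * LD l e * \<phi> a b c e)"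

definition slocc_le :: "'d::finite tensor4 \<Rightarrow> 'd tensor4 \<Rightarrow> bool" where
  "slocc_le \<psi> \<phi> \<longleftrightarrow> (\<exists>LA LB LC LD. apply_local LA LB LC LD \<phi> = \<psi>)"

definition slocc_maximal :: "'d::finite tensor4 \<Rightarrow> bool" where
  "slocc_maximal \<phi> \<longleftrightarrow> (\<forall>\<psi>. slocc_le \<phi> \<psi> \<longrightarrow> slocc_le \<psi> \<phi>)"

definition slocc_incomparable :: "'d::finite tensor4 \<Rightarrow> 'd tensor4 \<Rightarrow> bool" where
  "slocc_incomparable \<phi> \<psi> \<longleftrightarrow> \<not> slocc_le \<phi> \<psi> \<and> \<not> slocc_le \<psi> \<phi>"

text \<open>|Phi_d>^{AB} (x) |Phi_d>^{CD} = sum_{i,j} |i>_A|i>_B|j>_C|j>_D\<close>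
definition phi_AB_CD :: "'d tensor4" where
  "phi_AB_CD = (\<lambda>a b c e. if a = b \<and> c = e then 1 else 0)"

text \<open>|Phi_d>^{AC} (x) |Phi_d>^{BD} = sum_{i,j} |i>_A|j>_B|i>_C|j>_D\<close>
definition phi_AC_BD :: "'d tensor4" where
  "phi_AC_BD = (\<lambda>a b c e. if a = c \<and> b = e then 1 else 0)"

end

theory Submission
  imports Defs "HOL-Analysis.Analysis"
begin

(*
  Maximality: if (LA \<otimes> LB \<otimes> LC \<otimes> LD) \<psi> = \<phi> and the flattening of \<phi> along
  every single party has full rank d, then every local operator L_X must be invertible
  (the flattening of \<phi> along X factors through L_X).  Applying the inverses to \<phi> gives
  back \<psi>, so \<psi> \<le>_SLOCC \<phi>.  Both Bell-pair products have full local ranks, because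
  each party shares a maximally entangled pair with some other party.
  Incomparability: local operators map a product state across the cut AB|CD to a
  product state across AB|CD, while |\<Phi>_d>^{AC} \<otimes> |\<Phi>_d>^{BD} is not such a product
  when d \<ge> 2; the reverse comparison then fails by maximality.
*)

definition op_comp :: "'d::finite op \<Rightarrow> 'd op \<Rightarrow> 'd op" where
  "op_comp M L = (\<lambda>i j. \<Sum>a\<in>UNIV. M i a * L a j)"

definition op_id :: "'d op" where
  "op_id = (\<lambda>i j. if i = j then 1 else 0)"

text \<open>For square matrices a right inverse is also a left inverse; this is where the
  finite dimension enters (proved via the matrix library of HOL-Analysis).\<close>
lemma op_right_inverse_imp_left_inverse:
  fixes L Y :: "'d::finite op"
  assumes "op_comp L Y = op_id"
  shows "op_comp Y L = op_id"
proof -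
  let ?L = "(\<chi> i j. L i j) :: complex^'d^'d"
  let ?Y = "(\<chi> i j. Y i j) :: complex^'d^'d"
  have "?L ** ?Y = mat 1"
    using assms by (simp add: op_comp_def op_id_def fun_eq_iff matrix_matrix_mult_def mat_def vec_eq_iff)
  then have "?Y ** ?L = mat 1" using matrix_left_right_inverse by blast
  then show ?thesis
    by (simp add: op_comp_def op_id_def fun_eq_iff matrix_matrix_mult_def mat_def vec_eq_iff)
qed

definition modeA :: "'d::finite op \<Rightarrow> 'd tensor4 \<Rightarrow> 'd tensor4" where
  "modeA L x = (\<lambda>i b c e. \<Sum>a\<in>UNIV. L i a * x a b c e)"
definition modeB :: "'d::finite op \<Rightarrow> 'd tensor4 \<Rightarrow> 'd tensor4" where
  "modeB L x = (\<lambda>a i c e. \<Sum>b\<in>UNIV. L i b * x a b c e)"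
definition modeC :: "'d::finite op \<Rightarrow> 'd tensor4 \<Rightarrow> 'd tensor4" where
  "modeC L x = (\<lambda>a b i e. \<Sum>c\<in>UNIV. L i c * x a b c e)"
definition modeD :: "'d::finite op \<Rightarrow> 'd tensor4 \<Rightarrow> 'd tensor4" where
  "modeD L x = (\<lambda>a b c i. \<Sum>e\<in>UNIV. L i e * x a b c e)"

lemma apply_local_modes:
  "apply_local LA LB LC LD x = modeA LA (modeB LB (modeC LC (modeD LD x)))"
  unfolding apply_local_def modeA_def modeB_def modeC_def modeD_def
  by (simp only: sum_distrib_left mult.assoc)

lemma weighted_sums_commute:
  fixes M L :: "'a::finite \<Rightarrow> 'r::comm_semiring_1" and X :: "'a \<Rightarrow> 'a \<Rightarrow> 'r"
  shows "(\<Sum>b\<in>UNIV. M b * (\<Sum>a\<in>UNIV. L a * X a b)) = (\<Sum>a\<in>UNIV. L a * (\<Sum>b\<in>UNIV. M b * X a b))"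
proof -
  have "(\<Sum>b\<in>UNIV. M b * (\<Sum>a\<in>UNIV. L a * X a b)) = (\<Sum>b\<in>UNIV. \<Sum>a\<in>UNIV. L a * (M b * X a b))"
    by (simp only: sum_distrib_left mult.left_commute)
  also have "\<dots> = (\<Sum>a\<in>UNIV. L a * (\<Sum>b\<in>UNIV. M b * X a b))"
    by (subst sum.swap) (simp only: sum_distrib_left)
  finally show ?thesis .
qed

lemma weighted_sums_compose:
  fixes M L :: "'a::finite \<Rightarrow> 'a \<Rightarrow> 'r::comm_semiring_1" and X :: "'a \<Rightarrow> 'r"
  shows "(\<Sum>a\<in>UNIV. M i a * (\<Sum>b\<in>UNIV. L a b * X b)) = (\<Sum>b\<in>UNIV. (\<Sum>a\<in>UNIV. M i a * L a b) * X b)"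
proof -
  have "(\<Sum>a\<in>UNIV. M i a * (\<Sum>b\<in>UNIV. L a b * X b)) = (\<Sum>a\<in>UNIV. \<Sum>b\<in>UNIV. M i a * L a b * X b)"
    by (simp only: sum_distrib_left mult.assoc)
  also have "\<dots> = (\<Sum>b\<in>UNIV. (\<Sum>a\<in>UNIV. M i a * L a b) * X b)"
    by (subst sum.swap) (simp only: sum_distrib_right)
  finally show ?thesis .
qed

lemma modes_commute:
  "modeB M (modeA L x) = modeA L (modeB M x)" "modeC M (modeA L x) = modeA L (modeC M x)"
  "modeD M (modeA L x) = modeA L (modeD M x)" "modeC M (modeB L x) = modeB L (modeC M x)"
  "modeD M (modeB L x) = modeB L (modeD M x)" "modeD M (modeC L x) = modeC L (modeD M x)"
  unfolding modeA_def modeB_def modeC_def modeD_def by (intro ext weighted_sums_commute)+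

lemma modes_compose:
  "modeA M (modeA L x) = modeA (op_comp M L) x" "modeB M (modeB L x) = modeB (op_comp M L) x"
  "modeC M (modeC L x) = modeC (op_comp M L) x" "modeD M (modeD L x) = modeD (op_comp M L) x"
  unfolding modeA_def modeB_def modeC_def modeD_def op_comp_def by (intro ext weighted_sums_compose)+

lemma modes_id:
  "modeA op_id x = x" "modeB op_id x = x" "modeC op_id x = x" "modeD op_id x = x"
  unfolding modeA_def modeB_def modeC_def modeD_def op_id_def
  by (simp_all add: if_distrib[of "\<lambda>t. t * _"] cong: if_cong)

lemma apply_local_compose:
  "apply_local MA MB MC MD (apply_local LA LB LC LD \<psi>)
     = apply_local (op_comp MA LA) (op_comp MB LB) (op_comp MC LC) (op_comp MD LD) \<psi>"
  unfolding apply_local_modes by (simp add: modes_commute modes_compose)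

lemma apply_local_id: "apply_local op_id op_id op_id op_id \<psi> = \<psi>"
  unfolding apply_local_modes by (simp add: modes_id)

lemma slocc_le_reverse:
  assumes conv: "apply_local LA LB LC LD \<psi> = \<phi>"
    and inv: "op_comp LA YA = op_id" "op_comp LB YB = op_id"
             "op_comp LC YC = op_id" "op_comp LD YD = op_id"
  shows "slocc_le \<psi> \<phi>"
proof -
  have "apply_local YA YB YC YD \<phi> = \<psi>"
    unfolding conv[symmetric] apply_local_compose
    by (simp add: inv[THEN op_right_inverse_imp_left_inverse] apply_local_id)
  then show ?thesis unfolding slocc_le_def by blast
qed

lemma sum_rotate4:
  fixes f :: "'a::finite \<Rightarrow> 'b::finite \<Rightarrow> 'c::finite \<Rightarrow> 'e::finite \<Rightarrow> 'r::comm_monoid_add"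
  shows "(\<Sum>a\<in>UNIV. \<Sum>b\<in>UNIV. \<Sum>c\<in>UNIV. \<Sum>e\<in>UNIV. f a b c e)
       = (\<Sum>b\<in>UNIV. \<Sum>c\<in>UNIV. \<Sum>e\<in>UNIV. \<Sum>a\<in>UNIV. f a b c e)"
proof -
  have "(\<Sum>a\<in>UNIV. \<Sum>b\<in>UNIV. \<Sum>c\<in>UNIV. \<Sum>e\<in>UNIV. f a b c e)
      = (\<Sum>b\<in>UNIV. \<Sum>a\<in>UNIV. \<Sum>c\<in>UNIV. \<Sum>e\<in>UNIV. f a b c e)"
    by (rule sum.swap)
  also have "\<dots> = (\<Sum>b\<in>UNIV. \<Sum>c\<in>UNIV. \<Sum>a\<in>UNIV. \<Sum>e\<in>UNIV. f a b c e)"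
    by (intro sum.cong refl sum.swap)
  also have "\<dots> = (\<Sum>b\<in>UNIV. \<Sum>c\<in>UNIV. \<Sum>e\<in>UNIV. \<Sum>a\<in>UNIV. f a b c e)"
    by (intro sum.cong refl sum.swap)
  finally show ?thesis .
qed

definition rotate_parties :: "'d tensor4 \<Rightarrow> 'd tensor4" where
  "rotate_parties \<psi> = (\<lambda>a b c e. \<psi> b c e a)"

lemma apply_local_rotate:
  "apply_local LA LB LC LD (rotate_parties \<psi>) = rotate_parties (apply_local LB LC LD LA \<psi>)"
  unfolding apply_local_def rotate_parties_def
  by (intro ext, subst sum_rotate4) (simp add: mult_ac)

section \<open>Full local ranks imply SLOCC maximality\<close>

text \<open>The flattening of \<phi> along the first party (a d \<times> d^3 matrix) has full rank d,
  expressed by the existence of a right inverse R.\<close>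
definition full_rank_first_party :: "'d::finite tensor4 \<Rightarrow> bool" where
  "full_rank_first_party \<phi> \<longleftrightarrow>
     (\<exists>R. \<forall>i j. (\<Sum>b\<in>UNIV. \<Sum>c\<in>UNIV. \<Sum>e\<in>UNIV. \<phi> i b c e * R b c e j) = op_id i j)"

text \<open>Every party is brought to the first slot by a suitable number of rotations.\<close>
definition full_local_ranks :: "'d::finite tensor4 \<Rightarrow> bool" where
  "full_local_ranks \<phi> \<longleftrightarrow>
     full_rank_first_party \<phi> \<and> full_rank_first_party (rotate_parties \<phi>) \<and>
     full_rank_first_party (rotate_parties (rotate_parties \<phi>)) \<and>
     full_rank_first_party (rotate_parties (rotate_parties (rotate_parties \<phi>)))"

lemma full_rank_first_party_if_identity_slice:
  assumes "\<And>i j. \<phi> i (\<beta> j) (\<gamma> j) (\<epsilon> j) = op_id i j"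
  shows "full_rank_first_party \<phi>"
  unfolding full_rank_first_party_def
proof (intro exI allI)
  fix i j
  show "(\<Sum>b\<in>UNIV. \<Sum>c\<in>UNIV. \<Sum>e\<in>UNIV.
          \<phi> i b c e * (\<lambda>b c e j. if e = \<epsilon> j \<and> c = \<gamma> j \<and> b = \<beta> j then 1 else 0) b c e j)
        = op_id i j"
    using assms by (simp add: if_distrib[of "\<lambda>t. _ * t"] if_if_eq_conj[symmetric] sum.delta' cong: if_cong)
qed

text \<open>If a local conversion produces a state whose first flattening has full rank, the
  operator of the first party is right invertible: that flattening equals LA times the
  flattening of the partially converted state.\<close>
lemma first_operator_right_invertible:
  assumes conv: "apply_local LA LB LC LD \<psi> = \<phi>" and rank: "full_rank_first_party \<phi>"
  shows "\<exists>Y. op_comp LA Y = op_id"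
proof -
  obtain R where R: "\<And>i j. (\<Sum>b\<in>UNIV. \<Sum>c\<in>UNIV. \<Sum>e\<in>UNIV. \<phi> i b c e * R b c e j) = op_id i j"
    using rank unfolding full_rank_first_party_def by blast
  define W where "W = modeB LB (modeC LC (modeD LD \<psi>))"
  have \<phi>_eq: "\<phi> = modeA LA W"
    using conv unfolding W_def apply_local_modes by simp
  define Y where "Y = (\<lambda>a j. \<Sum>b\<in>UNIV. \<Sum>c\<in>UNIV. \<Sum>e\<in>UNIV. W a b c e * R b c e j)"
  have "op_comp LA Y i j = op_id i j" for i j
  proof -
    have "op_comp LA Y i j
        = (\<Sum>a\<in>UNIV. \<Sum>b\<in>UNIV. \<Sum>c\<in>UNIV. \<Sum>e\<in>UNIV. LA i a * W a b c e * R b c e j)"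
      unfolding op_comp_def Y_def by (simp add: sum_distrib_left mult.assoc)
    also have "\<dots> = (\<Sum>b\<in>UNIV. \<Sum>c\<in>UNIV. \<Sum>e\<in>UNIV. modeA LA W i b c e * R b c e j)"
      unfolding modeA_def by (subst sum_rotate4) (simp add: sum_distrib_right)
    finally show ?thesis using R by (simp add: \<phi>_eq)
  qed
  then show ?thesis by blast
qed

text \<open>The general criterion: a state with full local ranks is SLOCC maximal.  Rotating a
  conversion moves the operator of each party into the first slot.\<close>
lemma slocc_maximal_if_full_local_ranks:
  assumes "full_local_ranks \<phi>"
  shows "slocc_maximal \<phi>"
  unfolding slocc_maximal_def
proof (intro allI impI)
  fix \<psi> assume "slocc_le \<phi> \<psi>"
  then obtain LA LB LC LD where conv: "apply_local LA LB LC LD \<psi> = \<phi>"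
    unfolding slocc_le_def by blast
  let ?r = rotate_parties
  have "apply_local LD LA LB LC (?r \<psi>) = ?r \<phi>"
    "apply_local LC LD LA LB (?r (?r \<psi>)) = ?r (?r \<phi>)"
    "apply_local LB LC LD LA (?r (?r (?r \<psi>))) = ?r (?r (?r \<phi>))"
    by (simp_all add: apply_local_rotate conv)
  then have "\<exists>Y. op_comp LA Y = op_id" "\<exists>Y. op_comp LD Y = op_id"
    "\<exists>Y. op_comp LC Y = op_id" "\<exists>Y. op_comp LB Y = op_id"
    using conv assms first_operator_right_invertible unfolding full_local_ranks_def by blast+
  then show "slocc_le \<psi> \<phi>" using slocc_le_reverse[OF conv] by blast
qed

lemma rotate_twice_phi_AB_CD: "rotate_parties (rotate_parties phi_AB_CD) = phi_AB_CD"
  unfolding rotate_parties_def phi_AB_CD_def by (auto simp: fun_eq_iff)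

lemma rotate_phi_AC_BD: "rotate_parties phi_AC_BD = phi_AC_BD"
  unfolding rotate_parties_def phi_AC_BD_def by (auto simp: fun_eq_iff)

text \<open>Each party holds half of a Bell pair: fixing the two parties not in that pair at an
  arbitrary index (here undefined) leaves the identity matrix.  After one rotation the
  first party of phi_AB_CD is paired with the last one; two rotations give back phi_AB_CD.\<close>
lemma full_local_ranks_phi_AB_CD: "full_local_ranks phi_AB_CD"
proof -
  have "full_rank_first_party phi_AB_CD"
    by (rule full_rank_first_party_if_identity_slice[where \<beta> = id and \<gamma> = "\<lambda>_. undefined"
          and \<epsilon> = "\<lambda>_. undefined"]) (simp add: phi_AB_CD_def op_id_def)
  moreover have "full_rank_first_party (rotate_parties phi_AB_CD)"
    by (rule full_rank_first_party_if_identity_slice[where \<beta> = "\<lambda>_. undefined"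
          and \<gamma> = "\<lambda>_. undefined" and \<epsilon> = id]) (simp add: rotate_parties_def phi_AB_CD_def op_id_def)
  ultimately show ?thesis unfolding full_local_ranks_def by (simp add: rotate_twice_phi_AB_CD)
qed

text \<open>phi_AC_BD is invariant under rotation, so only the first party needs checking.\<close>
lemma full_local_ranks_phi_AC_BD: "full_local_ranks phi_AC_BD"
proof -
  have "full_rank_first_party phi_AC_BD"
    by (rule full_rank_first_party_if_identity_slice[where \<beta> = "\<lambda>_. undefined" and \<gamma> = id
          and \<epsilon> = "\<lambda>_. undefined"]) (simp add: phi_AC_BD_def op_id_def)
  then show ?thesis unfolding full_local_ranks_def by (simp add: rotate_phi_AC_BD)
qed

section \<open>Incomparability via the AB|CD cut\<close>

definition product_AB_CD :: "'d tensor4 \<Rightarrow> bool" where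
  "product_AB_CD \<phi> \<longleftrightarrow> (\<exists>P Q. \<forall>a b c e. \<phi> a b c e = P a b * Q c e)"

text \<open>Local operators preserve products across AB|CD: they act on the two factors separately.\<close>
lemma apply_local_preserves_product_AB_CD:
  assumes "product_AB_CD \<phi>"
  shows "product_AB_CD (apply_local LA LB LC LD \<phi>)"
proof -
  obtain P Q where PQ: "\<And>a b c e. \<phi> a b c e = P a b * Q c e"
    using assms unfolding product_AB_CD_def by blast
  define P' where "P' = (\<lambda>i j. \<Sum>a\<in>UNIV. \<Sum>b\<in>UNIV. LA i a * LB j b * P a b)"
  define Q' where "Q' = (\<lambda>k l. \<Sum>c\<in>UNIV. \<Sum>e\<in>UNIV. LC k c * LD l e * Q c e)"
  have "apply_local LA LB LC LD \<phi> i j k l = P' i j * Q' k l" for i j k l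
  proof -
    have "apply_local LA LB LC LD \<phi> i j k l
        = (\<Sum>a\<in>UNIV. \<Sum>b\<in>UNIV. \<Sum>c\<in>UNIV. \<Sum>e\<in>UNIV.
             (LA i a * LB j b * P a b) * (LC k c * LD l e * Q c e))"
      unfolding apply_local_def PQ by (simp add: mult_ac)
    also have "\<dots> = P' i j * Q' k l"
      unfolding P'_def Q'_def sum_distrib_right by (unfold sum_distrib_left) (rule refl)
    finally show ?thesis .
  qed
  then show ?thesis unfolding product_AB_CD_def by blast
qed

lemma product_AB_CD_phi_AB_CD: "product_AB_CD phi_AB_CD"
  unfolding product_AB_CD_def phi_AB_CD_def
  by (rule exI[of _ "\<lambda>a b. if a = b then 1 else 0"], rule exI[of _ "\<lambda>c e. if c = e then 1 else 0"]) simp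

text \<open>For d \<ge> 2 the AC|BD Bell-pair product is entangled across AB|CD: with x \<noteq> y the
  entries at (x,y,x,y) and (y,x,y,x) are 1 but the entry at (x,y,y,x) is 0.\<close>
lemma not_product_AB_CD_phi_AC_BD:
  assumes "card (UNIV :: 'd::finite set) \<ge> 2"
  shows "\<not> product_AB_CD (phi_AC_BD :: 'd tensor4)"
proof
  assume "product_AB_CD (phi_AC_BD :: 'd tensor4)"
  then obtain P Q where PQ: "\<And>a b c e. (phi_AC_BD :: 'd tensor4) a b c e = P a b * Q c e"
    unfolding product_AB_CD_def by blast
  have "\<not> card (UNIV :: 'd set) \<le> Suc 0" using assms by simp
  then obtain x y :: 'd where "x \<noteq> y"
    using card_le_Suc0_iff_eq[of "UNIV :: 'd set"] by auto
  then have "P x y * Q x y = 1" "P y x * Q y x = 1" "P x y * Q y x = 0"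
    using PQ[of x y x y] PQ[of y x y x] PQ[of x y y x] by (simp_all add: phi_AC_BD_def)
  then show False by auto
qed

theorem mainTheorem8:
  assumes "card (UNIV :: 'd::finite set) \<ge> 2"
  shows "slocc_maximal (phi_AB_CD :: 'd tensor4) \<and> slocc_maximal (phi_AC_BD :: 'd tensor4)
         \<and> slocc_incomparable (phi_AB_CD :: 'd tensor4) phi_AC_BD"
proof -
  have max_AB_CD: "slocc_maximal (phi_AB_CD :: 'd tensor4)"
    by (rule slocc_maximal_if_full_local_ranks[OF full_local_ranks_phi_AB_CD])
  have max_AC_BD: "slocc_maximal (phi_AC_BD :: 'd tensor4)"
    by (rule slocc_maximal_if_full_local_ranks[OF full_local_ranks_phi_AC_BD])
  have not_below: "\<not> slocc_le (phi_AC_BD :: 'd tensor4) phi_AB_CD"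
    using apply_local_preserves_product_AB_CD[OF product_AB_CD_phi_AB_CD]
      not_product_AB_CD_phi_AC_BD[OF assms] unfolding slocc_le_def by metis
  then have "\<not> slocc_le (phi_AB_CD :: 'd tensor4) phi_AC_BD"
    using max_AB_CD unfolding slocc_maximal_def by blast
  with max_AB_CD max_AC_BD not_below show ?thesis
    unfolding slocc_incomparable_def by blast
qed

end
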